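(* For $\lambda\in\{1,2\}$, the $\Gamma_2$-contractions $(M_{s_1},M_{s_2})|_{\mathbb A^{(\lambda)}_{\rm triv}(\mathbb D^2)}$ and $(M_{s_1},M_{s_2})|_{\mathbb A^{(\lambda)}_{\rm sign}(\mathbb D^2)}$ are not similar, i.e. there is no bounded invertible operator $X:\mathbb A^{(\lambda)}_{\rm triv}(\mathbb D^2)\to\mathbb A^{(\lambda)}_{\rm sign}(\mathbb D^2)$ with $XM_{s_i}=M_{s_i}X$ for $i=1,2$.
   Context: $s_1=z_1+z_2$, $s_2=z_1z_2$; $\Gamma_2=\{(z_1+z_2,z_1z_2):z\in\overline{\mathbb D}^2\}$ and a $\Gamma_2$-contraction is a commuting pair having $\Gamma_2$ as a spectral set. $\mathbb A^{(2)}(\mathbb D^2)$ is the Bergman space of $\mathbb D^2$ (kernel $\prod_i(1-z_i\bar w_i)^{-2}$) and $\mathbb A^{(1)}(\mathbb D^2)=H^2(\mathbb D^2)$ the Hardy space (kernel $\prod_i(1-z_i\bar w_i)^{-1}$). $\mathbb A^{(\lambda)}_{\rm triv}(\mathbb D^2)$ and $\mathbb A^{(\lambda)}_{\rm sign}(\mathbb D^2)$ are the subspaces of symmetric, respectively antisymmetric, functions under $(z_1,z_2)\mapsto(z_2,z_1)$. *)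

theory Defs
  imports "HOL-Analysis.Analysis"
begin

definition bidisc :: "(complex \<times> complex) set" where
  "bidisc = {z. norm (fst z) < 1 \<and> norm (snd z) < 1}"

text \<open>Norm weights of the space with reproducing kernel prod_i (1 - z_i conj w_i)^(-lam):
  the squared norm of the monomial z1^m z2^n is 1 / (C(m+lam-1,m) * C(n+lam-1,n)).
  lam = 1: Hardy space H^2(D^2); lam = 2: Bergman space of D^2.\<close>
definition wt :: "nat \<Rightarrow> nat \<times> nat \<Rightarrow> real" where
  "wt lam = (\<lambda>(m, n). 1 / (real ((m + lam - 1) choose m) * real ((n + lam - 1) choose n)))"

definition is_coeff :: "nat \<Rightarrow> (complex \<times> complex \<Rightarrow> complex) \<Rightarrow> (nat \<times> nat \<Rightarrow> complex) \<Rightarrow> bool" where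
  "is_coeff lam f a \<longleftrightarrow>
     (\<lambda>k. wt lam k * (cmod (a k))\<^sup>2) summable_on UNIV \<and>
     (\<forall>z \<in> bidisc. ((\<lambda>(m, n). a (m, n) * fst z ^ m * snd z ^ n) has_sum f z) UNIV) \<and>
     (\<forall>z. z \<notin> bidisc \<longrightarrow> f z = 0)"

definition Aspace :: "nat \<Rightarrow> (complex \<times> complex \<Rightarrow> complex) set" where
  "Aspace lam = {f. \<exists>a. is_coeff lam f a}"

definition hnorm :: "nat \<Rightarrow> (complex \<times> complex \<Rightarrow> complex) \<Rightarrow> real" where
  "hnorm lam f = sqrt (infsum (\<lambda>k. wt lam k * (cmod ((SOME a. is_coeff lam f a) k))\<^sup>2) UNIV)"

definition Atriv :: "nat \<Rightarrow> (complex \<times> complex \<Rightarrow> complex) set" where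
  "Atriv lam = {f \<in> Aspace lam. \<forall>z1 z2. f (z2, z1) = f (z1, z2)}"

definition Asign :: "nat \<Rightarrow> (complex \<times> complex \<Rightarrow> complex) set" where
  "Asign lam = {f \<in> Aspace lam. \<forall>z1 z2. f (z2, z1) = - f (z1, z2)}"

definition M_s1 :: "(complex \<times> complex \<Rightarrow> complex) \<Rightarrow> (complex \<times> complex \<Rightarrow> complex)" where
  "M_s1 f = (\<lambda>z. (fst z + snd z) * f z)"

definition M_s2 :: "(complex \<times> complex \<Rightarrow> complex) \<Rightarrow> (complex \<times> complex \<Rightarrow> complex)" where
  "M_s2 f = (\<lambda>z. (fst z * snd z) * f z)"

definition bounded_op :: "nat \<Rightarrow> (complex \<times> complex \<Rightarrow> complex) set \<Rightarrow> (complex \<times> complex \<Rightarrow> complex) set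
    \<Rightarrow> ((complex \<times> complex \<Rightarrow> complex) \<Rightarrow> (complex \<times> complex \<Rightarrow> complex)) \<Rightarrow> bool" where
  "bounded_op lam S T X \<longleftrightarrow>
     (\<forall>f \<in> S. X f \<in> T) \<and>
     (\<forall>f \<in> S. \<forall>g \<in> S. X (\<lambda>z. f z + g z) = (\<lambda>z. X f z + X g z)) \<and>
     (\<forall>f \<in> S. \<forall>c. X (\<lambda>z. c * f z) = (\<lambda>z. c * X f z)) \<and>
     (\<exists>C. \<forall>f \<in> S. hnorm lam (X f) \<le> C * hnorm lam f)"

end

theory Submission
  imports Defs "HOL-Complex_Analysis.Cauchy_Integral_Formula"
begin

text \<open>Let \<open>X\<close> be an invertible operator from \<open>A\<^sub>t\<^sub>r\<^sub>i\<^sub>v\<close> to \<open>A\<^sub>s\<^sub>i\<^sub>g\<^sub>n\<close> commuting with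
  \<open>M\<^sub>s\<^sub>1, M\<^sub>s\<^sub>2\<close>, with inverse \<open>Y\<close>, and put \<open>h = Y (z\<^sub>1 - z\<^sub>2)\<close>.
  Since \<open>z\<^sub>1\<^sup>n\<^sup>+\<^sup>1 - z\<^sub>2\<^sup>n\<^sup>+\<^sup>1 = h\<^sub>n (z\<^sub>1 - z\<^sub>2)\<close> with \<open>h\<^sub>n = \<Sum>\<^sub>k\<^sub>+\<^sub>l\<^sub>=\<^sub>n z\<^sub>1\<^sup>k z\<^sub>2\<^sup>l\<close> a polynomial
  in \<open>s\<^sub>1, s\<^sub>2\<close>, \<open>Y\<close> maps \<open>z\<^sub>1\<^sup>n\<^sup>+\<^sup>1 - z\<^sub>2\<^sup>n\<^sup>+\<^sup>1\<close> to \<open>h\<^sub>n h\<close>, all of whose coefficients of total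
  degree \<open>n\<close> equal \<open>h (0, 0)\<close>. This value is nonzero: otherwise \<open>h = s\<^sub>1 f\<^sub>1 + s\<^sub>2 f\<^sub>2\<close> with
  symmetric \<open>f\<^sub>i\<close>, and \<open>z\<^sub>1 - z\<^sub>2 = s\<^sub>1 X f\<^sub>1 + s\<^sub>2 X f\<^sub>2\<close> would have no linear term because the
  antisymmetric \<open>X f\<^sub>1\<close> vanishes at the origin. Hence the squared norm of \<open>h\<^sub>n h\<close> is at
  least \<open>\<bar>h (0, 0)\<bar>\<^sup>2 \<Sum>\<^sub>k\<^sub>+\<^sub>l\<^sub>=\<^sub>n \<parallel>z\<^sub>1\<^sup>k z\<^sub>2\<^sup>l\<parallel>\<^sup>2\<close>, while that of \<open>z\<^sub>1\<^sup>n\<^sup>+\<^sup>1 - z\<^sub>2\<^sup>n\<^sup>+\<^sup>1\<close> is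
  \<open>\<parallel>z\<^sub>1\<^sup>n\<^sup>+\<^sup>1\<parallel>\<^sup>2 + \<parallel>z\<^sub>2\<^sup>n\<^sup>+\<^sup>1\<parallel>\<^sup>2\<close>. For \<open>lam \<in> {1, 2}\<close> the quotient grows at least like the
  harmonic numbers, so \<open>Y\<close> is unbounded. Only this last estimate needs \<open>lam \<le> 2\<close>.\<close>

section \<open>Weights\<close>

lemma binomial_add_le_power_mult:
  "(m + i + L choose L) \<le> (i + 1) ^ L * (m + L choose L)"
proof (induction L)
  case 0
  then show ?case by simp
next
  case (Suc L)
  have "Suc L * (m + i + Suc L choose Suc L) = Suc (m + i + L) * (m + i + L choose L)"
    using Suc_times_binomial[of L "m + i + L"] by simp
  also have "\<dots> \<le> ((i + 1) * Suc (m + L)) * ((i + 1) ^ L * (m + L choose L))"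
    by (intro mult_mono Suc.IH) (auto simp: algebra_simps)
  also have "\<dots> = (i + 1) ^ Suc L * (Suc (m + L) * (m + L choose L))"
    by (simp add: algebra_simps)
  also have "\<dots> = Suc L * ((i + 1) ^ Suc L * (m + Suc L choose Suc L))"
    unfolding add_Suc_right Suc_times_binomial[of L "m + L", symmetric] by (simp only: mult_ac)
  finally show ?case by (simp only: Suc_mult_le_cancel1)
qed

lemma wt_swap: "wt lam (prod.swap k) = wt lam k"
  by (cases k) (simp add: wt_def)

lemma wt_nonneg: "0 \<le> wt lam k"
  by (auto simp: wt_def split: prod.splits)

lemma wt_eq:
  assumes "0 < lam"
  shows "wt lam (m, n) = 1 / (real (m + (lam - 1) choose (lam - 1)) * real (n + (lam - 1) choose (lam - 1)))"
  using assms binomial_symmetric[of m "m + (lam - 1)"] binomial_symmetric[of n "n + (lam - 1)"]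
  by (simp add: wt_def)

lemma wt_pos: "0 < lam \<Longrightarrow> 0 < wt lam k"
  by (cases k) (simp add: wt_eq)

lemma wt_1: "wt 1 k = 1"
  by (cases k) (simp add: wt_def)

lemma wt_2: "wt 2 (m, n) = 1 / (real (Suc m) * real (Suc n))"
  by (simp add: wt_def)

lemma wt_shift_le:
  assumes "0 < lam"
  shows "wt lam (m + i, n + j) \<le> wt lam (m, n)"
  using assms binomial_right_mono[of "m + (lam - 1)" "m + i + (lam - 1)" "lam - 1"]
    binomial_right_mono[of "n + (lam - 1)" "n + j + (lam - 1)" "lam - 1"]
  by (simp add: wt_eq frac_le mult_mono)

lemma wt_le_shift:
  assumes "0 < lam"
  shows "wt lam (m, n) \<le> real ((i + 1) ^ (lam - 1) * (j + 1) ^ (lam - 1)) * wt lam (m + i, n + j)"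
proof -
  have frac: "1 / (a * b) \<le> K * (1 / (a' * b'))"
    if "0 < a" "0 < b" "0 < a'" "0 < b'" "a' * b' \<le> K * (a * b)" for a b a' b' K :: real
    using that by (simp add: divide_simps mult_ac)
  have "real ((m + i + (lam - 1) choose (lam - 1)) * (n + j + (lam - 1) choose (lam - 1)))
      \<le> real (((i + 1) ^ (lam - 1) * (m + (lam - 1) choose (lam - 1)))
            * ((j + 1) ^ (lam - 1) * (n + (lam - 1) choose (lam - 1))))"
    by (intro of_nat_mono mult_mono binomial_add_le_power_mult) auto
  then show ?thesis
    unfolding wt_eq[OF assms] by (intro frac) (simp_all add: mult_ac)
qed

section \<open>Coefficient families\<close>

definition coeff_term :: "(nat \<times> nat \<Rightarrow> complex) \<Rightarrow> complex \<times> complex \<Rightarrow> nat \<times> nat \<Rightarrow> complex" where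
  "coeff_term a z = (\<lambda>(m, n). a (m, n) * fst z ^ m * snd z ^ n)"

lemma is_coeff_iff:
  "is_coeff lam f a \<longleftrightarrow>
     (\<lambda>k. wt lam k * (cmod (a k))\<^sup>2) summable_on UNIV \<and>
     (\<forall>z \<in> bidisc. (coeff_term a z has_sum f z) UNIV) \<and>
     (\<forall>z. z \<notin> bidisc \<longrightarrow> f z = 0)"
  by (simp add: is_coeff_def coeff_term_def)

lemma is_coeffD:
  assumes "is_coeff lam f a"
  shows is_coeff_weighted_summable: "(\<lambda>k. wt lam k * (cmod (a k))\<^sup>2) summable_on UNIV"
    and is_coeff_has_sum: "z \<in> bidisc \<Longrightarrow> (coeff_term a z has_sum f z) UNIV"
    and is_coeff_outside: "z \<notin> bidisc \<Longrightarrow> f z = 0"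
  using assms unfolding is_coeff_iff by blast+

lemma is_coeffI:
  assumes "(\<lambda>k. wt lam k * (cmod (a k))\<^sup>2) summable_on UNIV"
    and "\<And>z. z \<in> bidisc \<Longrightarrow> (coeff_term a z has_sum f z) UNIV"
    and "\<And>z. z \<notin> bidisc \<Longrightarrow> f z = 0"
  shows "is_coeff lam f a"
  using assms by (auto simp: is_coeff_iff)

lemma coeff_term_add: "coeff_term (\<lambda>k. a k + b k) z = (\<lambda>k. coeff_term a z k + coeff_term b z k)"
  by (auto simp: coeff_term_def algebra_simps)

lemma coeff_term_scale: "coeff_term (\<lambda>k. c * a k) z = (\<lambda>k. c * coeff_term a z k)"
  by (auto simp: coeff_term_def algebra_simps)

lemma is_coeff_add:
  assumes f: "is_coeff lam f a" and g: "is_coeff lam g b"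
  shows "is_coeff lam (\<lambda>z. f z + g z) (\<lambda>k. a k + b k)"
proof (rule is_coeffI)
  have "(\<lambda>k. 2 * (wt lam k * (cmod (a k))\<^sup>2) + 2 * (wt lam k * (cmod (b k))\<^sup>2)) summable_on UNIV"
    using f g by (intro summable_on_add summable_on_cmult_right is_coeff_weighted_summable)
  then show "(\<lambda>k. wt lam k * (cmod (a k + b k))\<^sup>2) summable_on UNIV"
  proof (rule summable_on_comparison_test)
    fix k
    have "(cmod (a k + b k))\<^sup>2 \<le> (cmod (a k) + cmod (b k))\<^sup>2"
      by (simp add: norm_triangle_ineq power_mono)
    also have "\<dots> \<le> 2 * (cmod (a k))\<^sup>2 + 2 * (cmod (b k))\<^sup>2"
      using sum_squares_bound[of "cmod (a k)" "cmod (b k)"] by (simp add: power2_sum)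
    finally have "(cmod (a k + b k))\<^sup>2 \<le> 2 * (cmod (a k))\<^sup>2 + 2 * (cmod (b k))\<^sup>2" .
    from mult_left_mono[OF this wt_nonneg]
    show "wt lam k * (cmod (a k + b k))\<^sup>2
        \<le> 2 * (wt lam k * (cmod (a k))\<^sup>2) + 2 * (wt lam k * (cmod (b k))\<^sup>2)"
      by (simp add: algebra_simps)
  qed (simp add: wt_nonneg)
  show "(coeff_term (\<lambda>k. a k + b k) z has_sum f z + g z) UNIV" if "z \<in> bidisc" for z
    unfolding coeff_term_add by (intro has_sum_add is_coeff_has_sum[OF f that] is_coeff_has_sum[OF g that])
qed (simp add: is_coeff_outside[OF f] is_coeff_outside[OF g])

lemma is_coeff_scale:
  assumes f: "is_coeff lam f a"
  shows "is_coeff lam (\<lambda>z. c * f z) (\<lambda>k. c * a k)"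
proof (rule is_coeffI)
  show "(\<lambda>k. wt lam k * (cmod (c * a k))\<^sup>2) summable_on UNIV"
    using summable_on_cmult_right[OF is_coeff_weighted_summable[OF f], of "(cmod c)\<^sup>2"]
    by (simp add: norm_mult power_mult_distrib algebra_simps)
  show "(coeff_term (\<lambda>k. c * a k) z has_sum c * f z) UNIV" if "z \<in> bidisc" for z
    unfolding coeff_term_scale by (intro has_sum_cmult_right is_coeff_has_sum[OF f that])
qed (simp add: is_coeff_outside[OF f])

lemma is_coeff_at_origin:
  assumes "is_coeff lam f a"
  shows "f (0, 0) = a (0, 0)"
proof -
  have "(coeff_term a (0, 0) has_sum a (0, 0)) UNIV"
    by (rule has_sum_finite_neutralI[of "{(0, 0)}"]) (auto simp: coeff_term_def zero_power)
  moreover have "(coeff_term a (0, 0) has_sum f (0, 0)) UNIV"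
    using assms by (rule is_coeff_has_sum) (simp add: bidisc_def)
  ultimately show ?thesis
    using has_sum_unique by blast
qed

section \<open>Index shifts and domination\<close>

lemma has_sum_shift_index:
  fixes g :: "nat \<times> nat \<Rightarrow> 'a::{comm_monoid_add, topological_space}"
  assumes "\<And>m n. \<not> (i \<le> m \<and> j \<le> n) \<Longrightarrow> g (m, n) = 0"
  shows "((\<lambda>(m, n). g (m + i, n + j)) has_sum s) UNIV \<longleftrightarrow> (g has_sum s) UNIV"
proof -
  define \<phi> where "\<phi> = (\<lambda>(m::nat, n::nat). (m + i, n + j))"
  have "inj \<phi>"
    by (auto simp: inj_def \<phi>_def)
  moreover have "(\<lambda>(m, n). g (m + i, n + j)) = g \<circ> \<phi>"
    by (auto simp: \<phi>_def)
  ultimately have "((\<lambda>(m, n). g (m + i, n + j)) has_sum s) UNIV \<longleftrightarrow> (g has_sum s) (range \<phi>)"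
    by (simp add: has_sum_reindex)
  also have "\<dots> \<longleftrightarrow> (g has_sum s) UNIV"
  proof (rule has_sum_cong_neutral)
    fix k assume k: "k \<in> UNIV - range \<phi>"
    obtain m n where mn: "k = (m, n)"
      by (cases k)
    have "\<not> (i \<le> m \<and> j \<le> n)"
    proof
      assume "i \<le> m \<and> j \<le> n"
      then have "k = \<phi> (m - i, n - j)"
        by (simp add: mn \<phi>_def)
      then show False
        using k by blast
    qed
    then show "g k = 0"
      using assms mn by simp
  qed auto
  finally show ?thesis .
qed

lemma summable_on_shift_index_iff:
  fixes g :: "nat \<times> nat \<Rightarrow> 'a::{comm_monoid_add, topological_space}"
  assumes "\<And>m n. \<not> (i \<le> m \<and> j \<le> n) \<Longrightarrow> g (m, n) = 0"
  shows "(\<lambda>(m, n). g (m + i, n + j)) summable_on UNIV \<longleftrightarrow> g summable_on UNIV"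
  unfolding summable_on_def using has_sum_shift_index[where g = g, OF assms] by simp

lemma summable_on_shift_index:
  fixes g :: "nat \<times> nat \<Rightarrow> 'a::banach"
  assumes "g summable_on UNIV"
  shows "(\<lambda>(m, n). g (m + i, n + j)) summable_on UNIV"
proof -
  define \<phi> where "\<phi> = (\<lambda>(m::nat, n::nat). (m + i, n + j))"
  have "inj \<phi>"
    by (auto simp: inj_def \<phi>_def)
  moreover have "(\<lambda>(m, n). g (m + i, n + j)) = g \<circ> \<phi>"
    by (auto simp: \<phi>_def)
  moreover have "g summable_on range \<phi>"
    using assms by (rule summable_on_subset_banach) simp
  ultimately show ?thesis
    by (simp add: summable_on_reindex)
qed

definition coeff_shift :: "nat \<Rightarrow> nat \<Rightarrow> (nat \<times> nat \<Rightarrow> complex) \<Rightarrow> nat \<times> nat \<Rightarrow> complex" where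
  "coeff_shift i j a = (\<lambda>(m, n). if i \<le> m \<and> j \<le> n then a (m - i, n - j) else 0)"

definition coeff_backshift :: "nat \<Rightarrow> nat \<Rightarrow> (nat \<times> nat \<Rightarrow> complex) \<Rightarrow> nat \<times> nat \<Rightarrow> complex" where
  "coeff_backshift i j a = (\<lambda>(m, n). a (m + i, n + j))"

lemma is_coeff_mult_monomial:
  assumes lam: "0 < lam" and f: "is_coeff lam f a"
  shows "is_coeff lam (\<lambda>z. fst z ^ i * snd z ^ j * f z) (coeff_shift i j a)"
proof (rule is_coeffI)
  let ?G = "\<lambda>k. wt lam k * (cmod (coeff_shift i j a k))\<^sup>2"
  have "(\<lambda>(m, n). ?G (m + i, n + j)) summable_on UNIV"
    by (rule summable_on_comparison_test[OF is_coeff_weighted_summable[OF f]])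
      (auto simp: coeff_shift_def wt_nonneg intro!: mult_right_mono wt_shift_le[OF lam])
  moreover have "\<And>m n. \<not> (i \<le> m \<and> j \<le> n) \<Longrightarrow> ?G (m, n) = 0"
    by (auto simp: coeff_shift_def)
  ultimately show "?G summable_on UNIV"
    using summable_on_shift_index_iff[where g = ?G] by blast
  show "(coeff_term (coeff_shift i j a) z has_sum fst z ^ i * snd z ^ j * f z) UNIV"
    if "z \<in> bidisc" for z
  proof -
    have "(\<lambda>(m, n). coeff_term (coeff_shift i j a) z (m + i, n + j))
        = (\<lambda>k. fst z ^ i * snd z ^ j * coeff_term a z k)"
      by (auto simp: fun_eq_iff coeff_term_def coeff_shift_def power_add)
    then have "((\<lambda>(m, n). coeff_term (coeff_shift i j a) z (m + i, n + j))
        has_sum fst z ^ i * snd z ^ j * f z) UNIV"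
      using has_sum_cmult_right[OF is_coeff_has_sum[OF f that]] by simp
    then show ?thesis
      by (subst (asm) has_sum_shift_index) (auto simp: coeff_term_def coeff_shift_def)
  qed
qed (simp add: is_coeff_outside[OF f])

lemma is_coeff_M_s1:
  assumes "0 < lam" and "is_coeff lam f a"
  shows "is_coeff lam (M_s1 f) (\<lambda>k. coeff_shift 1 0 a k + coeff_shift 0 1 a k)"
proof -
  have "M_s1 f = (\<lambda>z. fst z ^ 1 * snd z ^ 0 * f z + fst z ^ 0 * snd z ^ 1 * f z)"
    by (simp add: M_s1_def fun_eq_iff algebra_simps)
  then show ?thesis
    by (simp only:) (rule is_coeff_add[OF is_coeff_mult_monomial[OF assms] is_coeff_mult_monomial[OF assms]])
qed

lemma is_coeff_M_s2:
  assumes "0 < lam" and "is_coeff lam f a"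
  shows "is_coeff lam (M_s2 f) (coeff_shift 1 1 a)"
proof -
  have "M_s2 f = (\<lambda>z. fst z ^ 1 * snd z ^ 1 * f z)"
    by (simp add: M_s2_def)
  then show ?thesis
    by (simp only:) (rule is_coeff_mult_monomial[OF assms])
qed

definition power_series :: "(nat \<times> nat \<Rightarrow> complex) \<Rightarrow> complex \<times> complex \<Rightarrow> complex" where
  "power_series a z = (if z \<in> bidisc then (\<Sum>\<^sub>\<infinity>k. coeff_term a z k) else 0)"

lemma is_coeff_power_series:
  assumes "(\<lambda>k. wt lam k * (cmod (a k))\<^sup>2) summable_on UNIV"
    and "\<And>z. z \<in> bidisc \<Longrightarrow> (\<lambda>k. norm (coeff_term a z k)) summable_on UNIV"
  shows "is_coeff lam (power_series a) a"
proof (rule is_coeffI)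
  show "(coeff_term a z has_sum power_series a z) UNIV" if "z \<in> bidisc" for z
    using abs_summable_summable[OF assms(2)[OF that]] that by (simp add: power_series_def)
qed (use assms(1) in \<open>simp_all add: power_series_def\<close>)

lemma is_coeff_abs_summable:
  assumes "is_coeff lam f a" and "z \<in> bidisc"
  shows "(\<lambda>k. norm (coeff_term a z k)) summable_on UNIV"
  using has_sum_imp_summable[OF is_coeff_has_sum[OF assms]]
  by (simp add: summable_on_iff_abs_summable_on_complex)

lemma is_coeff_dominated:
  assumes f: "is_coeff lam f a" and le: "\<And>k. cmod (b k) \<le> cmod (a k)"
  shows "is_coeff lam (power_series b) b"
proof (rule is_coeff_power_series)
  show "(\<lambda>k. wt lam k * (cmod (b k))\<^sup>2) summable_on UNIV"
    by (rule summable_on_comparison_test[OF is_coeff_weighted_summable[OF f]])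
      (auto simp: wt_nonneg intro!: mult_left_mono power_mono le)
  show "(\<lambda>k. norm (coeff_term b z k)) summable_on UNIV" if "z \<in> bidisc" for z
    by (rule summable_on_comparison_test[OF is_coeff_abs_summable[OF f that]])
      (auto simp: coeff_term_def norm_mult intro!: mult_right_mono le)
qed

lemma is_coeff_norm_add:
  assumes "is_coeff lam f a" and "is_coeff lam g b"
  shows "\<exists>h d. is_coeff lam h d \<and> (\<forall>k. cmod (d k) = cmod (a k) + cmod (b k))"
proof -
  have "is_coeff lam (power_series (\<lambda>k. cmod (a k))) (\<lambda>k. cmod (a k))"
    "is_coeff lam (power_series (\<lambda>k. cmod (b k))) (\<lambda>k. cmod (b k))"
    by (simp_all add: is_coeff_dominated[OF assms(1)] is_coeff_dominated[OF assms(2)])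
  moreover have "cmod (complex_of_real (cmod (a k)) + complex_of_real (cmod (b k)))
      = cmod (a k) + cmod (b k)" for k
    by (metis norm_of_real of_real_add abs_of_nonneg add_nonneg_nonneg norm_ge_zero)
  ultimately show ?thesis
    using is_coeff_add by blast
qed

lemma is_coeff_dominated_add:
  assumes "is_coeff lam f a" and "is_coeff lam g b"
    and le: "\<And>k. cmod (c k) \<le> cmod (a k) + cmod (b k)"
  shows "is_coeff lam (power_series c) c"
proof -
  obtain h d where "is_coeff lam h d" and "\<And>k. cmod (d k) = cmod (a k) + cmod (b k)"
    using is_coeff_norm_add[OF assms(1,2)] by blast
  then show ?thesis
    by (intro is_coeff_dominated) (auto simp: le)
qed

lemma is_coeff_backshift:
  assumes lam: "0 < lam" and f: "is_coeff lam f a"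
  shows "is_coeff lam (power_series (coeff_backshift i j a)) (coeff_backshift i j a)"
proof (rule is_coeff_power_series)
  define K where "K = real ((i + 1) ^ (lam - 1) * (j + 1) ^ (lam - 1))"
  have "(\<lambda>k. K * (\<lambda>(m, n). wt lam (m + i, n + j) * (cmod (a (m + i, n + j)))\<^sup>2) k) summable_on UNIV"
    by (rule summable_on_cmult_right[OF summable_on_shift_index[OF is_coeff_weighted_summable[OF f]]])
  then show "(\<lambda>k. wt lam k * (cmod (coeff_backshift i j a k))\<^sup>2) summable_on UNIV"
  proof (rule summable_on_comparison_test)
    fix k :: "nat \<times> nat"
    obtain m n where k: "k = (m, n)"
      by (cases k)
    show "wt lam k * (cmod (coeff_backshift i j a k))\<^sup>2
        \<le> K * (\<lambda>(m, n). wt lam (m + i, n + j) * (cmod (a (m + i, n + j)))\<^sup>2) k"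
      using mult_right_mono[OF wt_le_shift[OF lam, of m n i j], of "(cmod (a (m + i, n + j)))\<^sup>2"]
      by (simp add: k K_def coeff_backshift_def)
  qed (simp add: wt_nonneg)
  show "(\<lambda>k. norm (coeff_term (coeff_backshift i j a) z k)) summable_on UNIV" if z: "z \<in> bidisc" for z
  proof -
    txt \<open>Dominate by the absolutely convergent series at a real point \<open>(r, r)\<close> of the
      bidisc with \<open>r \<ge> \<bar>z\<^sub>1\<bar>, \<bar>z\<^sub>2\<bar>\<close>; this also covers \<open>z\<^sub>1 = 0\<close> or \<open>z\<^sub>2 = 0\<close>.\<close>
    define r where "r = (1 + max (cmod (fst z)) (cmod (snd z))) / 2"
    have r: "cmod (fst z) \<le> r" "cmod (snd z) \<le> r" "0 < r" "r < 1"
      using z by (auto simp: r_def bidisc_def max_def add_pos_nonneg)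
    define w where "w = (complex_of_real r, complex_of_real r)"
    have "w \<in> bidisc"
      using r by (simp add: w_def bidisc_def)
    have "(\<lambda>k. (1 / r ^ (i + j)) * (\<lambda>(m, n). norm (coeff_term a w (m + i, n + j))) k) summable_on UNIV"
      by (rule summable_on_cmult_right[OF summable_on_shift_index[OF is_coeff_abs_summable[OF f \<open>w \<in> bidisc\<close>]]])
    then show ?thesis
    proof (rule summable_on_comparison_test)
      fix k :: "nat \<times> nat"
      obtain m n where k: "k = (m, n)"
        by (cases k)
      have "norm (coeff_term (coeff_backshift i j a) z k)
          = cmod (a (m + i, n + j)) * (cmod (fst z) ^ m * cmod (snd z) ^ n)"
        by (simp add: k coeff_term_def coeff_backshift_def norm_mult norm_power)
      also have "\<dots> \<le> cmod (a (m + i, n + j)) * (r ^ m * r ^ n)"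
        using r by (intro mult_left_mono mult_mono power_mono) auto
      also have "\<dots> = (1 / r ^ (i + j)) * (\<lambda>(m, n). norm (coeff_term a w (m + i, n + j))) k"
        using r by (simp add: k w_def coeff_term_def norm_mult norm_power power_add field_simps)
      finally show "norm (coeff_term (coeff_backshift i j a) z k)
          \<le> (1 / r ^ (i + j)) * (\<lambda>(m, n). norm (coeff_term a w (m + i, n + j))) k" .
    qed simp
  qed
qed

section \<open>Uniqueness of coefficients\<close>

lemma powser_sums_zero_coeff:
  fixes c :: "nat \<Rightarrow> complex"
  assumes sums: "\<And>x. norm x < 1 \<Longrightarrow> (\<lambda>n. c n * x ^ n) sums 0"
  shows "c m = 0"
proof (rule ccontr)
  assume nz: "c m \<noteq> 0"
  show False
  proof (cases "m = 0")
    case True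
    then show False
      using sums[of 0] nz by simp
  next
    case False
    show False
    proof (rule powser_0_nonzero[where r = 1 and \<xi> = 0 and a = c and f = "\<lambda>_. 0" and m = m])
      fix s :: real
      assume "0 < s" and nonzero: "\<And>z::complex. z \<in> cball 0 s - {0} \<Longrightarrow> 0 \<noteq> 0"
      then show False
        using nonzero[of "of_real s"] by simp
    qed (use sums nz False in auto)
  qed
qed

lemma double_powser_row_sums_zero:
  assumes zero: "\<And>z. z \<in> bidisc \<Longrightarrow> (coeff_term d z has_sum 0) UNIV" and w: "norm w < 1"
  shows "(\<lambda>n. d (m, n) * w ^ n) sums 0"
proof -
  have row_summable: "(\<lambda>n. d (m, n) * w ^ n) summable_on UNIV" for m
  proof -
    have "(\<lambda>(m, n). coeff_term d (1 / 2, w) (m, n)) summable_on UNIV \<times> UNIV"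
      using zero[of "(1 / 2, w)"] w by (auto simp: bidisc_def intro: has_sum_imp_summable)
    from summable_on_SigmaD1[OF this]
    have "(\<lambda>n. 2 ^ m * coeff_term d (1 / 2, w) (m, n)) summable_on UNIV"
      by (intro summable_on_cmult_right) simp
    then show ?thesis
      by (simp add: coeff_term_def power_one_over)
  qed
  define g where "g m = (\<Sum>\<^sub>\<infinity>n. d (m, n) * w ^ n)" for m
  have g: "((\<lambda>n. d (m, n) * w ^ n) has_sum g m) UNIV" for m
    using row_summable by (simp add: g_def)
  have "g m = 0" for m
  proof (rule powser_sums_zero_coeff)
    fix x :: complex
    assume x: "norm x < 1"
    have "((\<lambda>m. x ^ m * g m) has_sum 0) UNIV"
    proof (rule has_sum_SigmaD)
      show "(coeff_term d (x, w) has_sum 0) (UNIV \<times> UNIV)"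
        using zero x w by (simp add: bidisc_def)
      show "((\<lambda>n. coeff_term d (x, w) (m, n)) has_sum x ^ m * g m) UNIV" for m
        using has_sum_cmult_right[OF g, of "x ^ m"] by (simp add: coeff_term_def algebra_simps)
    qed
    then show "(\<lambda>m. g m * x ^ m) sums 0"
      by (simp add: has_sum_imp_sums mult.commute)
  qed
  then show ?thesis
    using g[of m] by (simp add: has_sum_imp_sums)
qed

lemma double_powser_has_sum_zero_coeff:
  assumes "\<And>z. z \<in> bidisc \<Longrightarrow> (coeff_term d z has_sum 0) UNIV"
  shows "d k = 0"
proof -
  obtain m n where "k = (m, n)"
    by (cases k)
  then show ?thesis
    using powser_sums_zero_coeff[of "\<lambda>n. d (m, n)"] double_powser_row_sums_zero[OF assms] by blast
qed

lemma is_coeff_unique: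
  assumes f: "is_coeff lam f a" and g: "is_coeff lam f b"
  shows "a = b"
proof
  fix k
  have "(\<lambda>k. a k - b k) k = 0"
  proof (rule double_powser_has_sum_zero_coeff)
    fix z
    assume z: "z \<in> bidisc"
    have "coeff_term (\<lambda>k. a k - b k) z = (\<lambda>k. coeff_term a z k + - coeff_term b z k)"
      by (auto simp: coeff_term_def algebra_simps)
    then show "(coeff_term (\<lambda>k. a k - b k) z has_sum 0) UNIV"
      using has_sum_add[OF is_coeff_has_sum[OF f z] has_sum_uminusI[OF is_coeff_has_sum[OF g z]]]
      by simp
  qed
  then show "a k = b k"
    by simp
qed

lemma is_coeff_fun_unique:
  assumes f: "is_coeff lam f a" and g: "is_coeff lam g a"
  shows "f = g"
proof
  fix z
  show "f z = g z"
    using has_sum_unique[OF is_coeff_has_sum[OF f] is_coeff_has_sum[OF g]]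
      is_coeff_outside[OF f] is_coeff_outside[OF g]
    by (cases "z \<in> bidisc") auto
qed

lemma hnorm_is_coeff:
  assumes "is_coeff lam f a"
  shows "hnorm lam f = sqrt (\<Sum>\<^sub>\<infinity>k. wt lam k * (cmod (a k))\<^sup>2)"
proof -
  have "is_coeff lam f (SOME a. is_coeff lam f a)"
    using assms by (rule someI[where P = "is_coeff lam f"])
  then have "(SOME a. is_coeff lam f a) = a"
    using assms by (rule is_coeff_unique)
  then show ?thesis
    by (simp add: hnorm_def)
qed

lemma hnorm_nonneg: "0 \<le> hnorm lam f"
  by (simp add: hnorm_def infsum_nonneg wt_nonneg)

lemma sum_weighted_coeff_le_hnorm_sq:
  assumes f: "is_coeff lam f a" and "finite F"
  shows "(\<Sum>k\<in>F. wt lam k * (cmod (a k))\<^sup>2) \<le> (hnorm lam f)\<^sup>2"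
proof -
  have "(\<Sum>k\<in>F. wt lam k * (cmod (a k))\<^sup>2) \<le> (\<Sum>\<^sub>\<infinity>k. wt lam k * (cmod (a k))\<^sup>2)"
    using is_coeff_weighted_summable[OF f] assms(2) by (rule finite_sum_le_infsum) (auto simp: wt_nonneg)
  moreover have "0 \<le> (\<Sum>\<^sub>\<infinity>k. wt lam k * (cmod (a k))\<^sup>2)"
    by (rule infsum_nonneg) (simp add: wt_nonneg)
  ultimately show ?thesis
    by (simp add: hnorm_is_coeff[OF f])
qed

lemma bidisc_swap: "prod.swap z \<in> bidisc \<longleftrightarrow> z \<in> bidisc"
  by (auto simp: bidisc_def)

lemma is_coeff_swap:
  assumes f: "is_coeff lam f a"
  shows "is_coeff lam (f \<circ> prod.swap) (a \<circ> prod.swap)"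
proof (rule is_coeffI)
  have "(\<lambda>k. wt lam (prod.swap k) * (cmod (a (prod.swap k)))\<^sup>2) summable_on UNIV"
    using is_coeff_weighted_summable[OF f]
    by (subst summable_on_reindex_bij_betw[where g = prod.swap and A = UNIV and B = UNIV]) auto
  then show "(\<lambda>k. wt lam k * (cmod ((a \<circ> prod.swap) k))\<^sup>2) summable_on UNIV"
    by (simp add: wt_swap case_prod_beta)
  show "(coeff_term (a \<circ> prod.swap) z has_sum (f \<circ> prod.swap) z) UNIV" if "z \<in> bidisc" for z
  proof -
    have "(coeff_term a (prod.swap z) has_sum f (prod.swap z)) UNIV"
      using that by (intro is_coeff_has_sum[OF f]) (simp add: bidisc_swap)
    then have "((\<lambda>k. coeff_term a (prod.swap z) (prod.swap k)) has_sum f (prod.swap z)) UNIV"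
      by (subst has_sum_reindex_bij_betw[where g = prod.swap and A = UNIV and B = UNIV]) auto
    moreover have "(\<lambda>k. coeff_term a (prod.swap z) (prod.swap k)) = coeff_term (a \<circ> prod.swap) z"
      by (simp add: fun_eq_iff coeff_term_def case_prod_beta mult_ac)
    ultimately show ?thesis
      by simp
  qed
qed (simp add: is_coeff_outside[OF f] bidisc_swap)

lemma is_coeff_symmetric:
  assumes f: "is_coeff lam f a" and sym: "\<And>z1 z2. f (z2, z1) = f (z1, z2)"
  shows "a (n, m) = a (m, n)"
proof -
  have "f \<circ> prod.swap = f"
    using sym by (auto simp: fun_eq_iff)
  then have "a \<circ> prod.swap = a"
    using is_coeff_unique[OF is_coeff_swap[OF f]] f by simp
  then show ?thesis
    by (metis comp_apply swap_simp)
qed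

lemma power_series_symmetric:
  assumes sym: "\<And>m n. a (n, m) = a (m, n)"
  shows "power_series a (z2, z1) = power_series a (z1, z2)"
proof -
  have "(\<Sum>\<^sub>\<infinity>k. coeff_term a (z2, z1) k) = (\<Sum>\<^sub>\<infinity>k. coeff_term a (z2, z1) (prod.swap k))"
    by (rule infsum_reindex_bij_betw[symmetric]) auto
  also have "\<dots> = (\<Sum>\<^sub>\<infinity>k. coeff_term a (z1, z2) k)"
    using sym by (intro infsum_cong) (auto simp: coeff_term_def algebra_simps)
  finally show ?thesis
    using bidisc_swap[of "(z1, z2)"] by (simp add: power_series_def)
qed

section \<open>The symmetric and antisymmetric subspaces\<close>

lemma Atriv_M_s:
  assumes lam: "0 < lam" and f: "f \<in> Atriv lam"
  shows "M_s1 f \<in> Atriv lam" and "M_s2 f \<in> Atriv lam"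
proof -
  obtain a where a: "is_coeff lam f a" and sym: "\<And>z1 z2. f (z2, z1) = f (z1, z2)"
    using f by (auto simp: Atriv_def Aspace_def)
  have "M_s1 f (z2, z1) = M_s1 f (z1, z2)" and "M_s2 f (z2, z1) = M_s2 f (z1, z2)" for z1 z2
    using sym[of z1 z2] by (simp_all add: M_s1_def M_s2_def mult.commute add.commute)
  then show "M_s1 f \<in> Atriv lam" and "M_s2 f \<in> Atriv lam"
    using is_coeff_M_s1[OF lam a] is_coeff_M_s2[OF lam a] unfolding Atriv_def Aspace_def by blast+
qed

lemma Asign_M_s:
  assumes lam: "0 < lam" and f: "f \<in> Asign lam"
  shows "M_s1 f \<in> Asign lam" and "M_s2 f \<in> Asign lam"
proof -
  obtain a where a: "is_coeff lam f a" and anti: "\<And>z1 z2. f (z2, z1) = - f (z1, z2)"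
    using f unfolding Asign_def Aspace_def by blast
  have "M_s1 f (z2, z1) = - M_s1 f (z1, z2)" and "M_s2 f (z2, z1) = - M_s2 f (z1, z2)" for z1 z2
    using anti[of z1 z2] by (simp_all add: M_s1_def M_s2_def mult.commute add.commute)
  then show "M_s1 f \<in> Asign lam" and "M_s2 f \<in> Asign lam"
    using is_coeff_M_s1[OF lam a] is_coeff_M_s2[OF lam a] unfolding Asign_def Aspace_def by blast+
qed

lemma Asign_scale:
  assumes "f \<in> Asign lam"
  shows "(\<lambda>z. c * f z) \<in> Asign lam"
proof -
  obtain a where a: "is_coeff lam f a" and anti: "\<And>z1 z2. f (z2, z1) = - f (z1, z2)"
    using assms unfolding Asign_def Aspace_def by blast
  have "c * f (z2, z1) = - (c * f (z1, z2))" for z1 z2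
    using anti[of z1 z2] by simp
  then show ?thesis
    using is_coeff_scale[OF a, of c] unfolding Asign_def Aspace_def by blast
qed

lemma Asign_at_origin:
  assumes "f \<in> Asign lam"
  shows "f (0, 0) = 0"
proof -
  have "f (0, 0) = - f (0, 0)"
    using assms unfolding Asign_def by blast
  then have "2 * f (0, 0) = 0"
    by (metis add.right_inverse mult_2)
  then show ?thesis
    by simp
qed

text \<open>A symmetric \<open>h = \<Sum> c\<^sub>m\<^sub>n z\<^sub>1\<^sup>m z\<^sub>2\<^sup>n\<close> with \<open>c\<^sub>0\<^sub>0 = 0\<close> is written as \<open>s\<^sub>1 f\<^sub>1 + s\<^sub>2 f\<^sub>2\<close>:
  \<open>f\<^sub>1\<close> consists of the terms of \<open>h\<close> on the two axes divided by \<open>z\<^sub>1\<close> resp. \<open>z\<^sub>2\<close>, and \<open>f\<^sub>2\<close>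
  is the remainder \<open>h - s\<^sub>1 f\<^sub>1\<close> divided by \<open>z\<^sub>1 z\<^sub>2\<close>.\<close>

definition s1_quotient_coeff :: "(nat \<times> nat \<Rightarrow> complex) \<Rightarrow> nat \<times> nat \<Rightarrow> complex" where
  "s1_quotient_coeff c =
     (\<lambda>(m, n). if n = 0 then c (m + 1, 0) else if m = 0 then c (0, n + 1) else 0)"

definition s2_quotient_coeff :: "(nat \<times> nat \<Rightarrow> complex) \<Rightarrow> nat \<times> nat \<Rightarrow> complex" where
  "s2_quotient_coeff c =
     (\<lambda>(m, n). c (m + 1, n + 1) - (if n = 0 then c (m + 2, 0) else 0)
                                 - (if m = 0 then c (0, n + 2) else 0))"

lemma s_quotient_coeff_decomp:
  assumes "c (0, 1) = c (1, 0)" and "c (0, 0) = 0"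
  shows "(\<lambda>k. coeff_shift 1 0 (s1_quotient_coeff c) k + coeff_shift 0 1 (s1_quotient_coeff c) k
             + coeff_shift 1 1 (s2_quotient_coeff c) k) = c"
proof
  fix k :: "nat \<times> nat"
  obtain m n where k: "k = (m, n)"
    by (cases k)
  have "m = 0 \<or> m = 1 \<or> 2 \<le> m" and "n = 0 \<or> n = 1 \<or> 2 \<le> n"
    by auto
  then show "coeff_shift 1 0 (s1_quotient_coeff c) k + coeff_shift 0 1 (s1_quotient_coeff c) k
      + coeff_shift 1 1 (s2_quotient_coeff c) k = c k"
    using assms
    by (auto simp: k coeff_shift_def s1_quotient_coeff_def s2_quotient_coeff_def numeral_2_eq_2)
qed

lemma is_coeff_s1_quotient:
  assumes lam: "0 < lam" and c: "is_coeff lam h c"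
  shows "is_coeff lam (power_series (s1_quotient_coeff c)) (s1_quotient_coeff c)"
  using is_coeff_backshift[OF lam c, of 1 0] is_coeff_backshift[OF lam c, of 0 1]
  by (rule is_coeff_dominated_add) (auto simp: s1_quotient_coeff_def coeff_backshift_def)

lemma is_coeff_s2_quotient:
  assumes lam: "0 < lam" and c: "is_coeff lam h c"
  shows "is_coeff lam (power_series (s2_quotient_coeff c)) (s2_quotient_coeff c)"
proof -
  obtain g d where d: "is_coeff lam g d"
    and norm_d: "\<And>k. cmod (d k) = cmod (coeff_backshift 2 0 c k) + cmod (coeff_backshift 0 2 c k)"
    using is_coeff_norm_add[OF is_coeff_backshift[OF lam c] is_coeff_backshift[OF lam c]] by blast
  show ?thesis
    using is_coeff_backshift[OF lam c] d
  proof (rule is_coeff_dominated_add)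
    fix k :: "nat \<times> nat"
    obtain m n where k: "k = (m, n)"
      by (cases k)
    have triangle: "cmod (x - y - w) \<le> cmod x + (cmod y + cmod w)" for x y w :: complex
      using norm_triangle_ineq4[of "x - y" w] norm_triangle_ineq4[of x y] by linarith
    have "cmod (if n = 0 then c (m + 2, 0) else 0) \<le> cmod (coeff_backshift 2 0 c k)"
      and "cmod (if m = 0 then c (0, n + 2) else 0) \<le> cmod (coeff_backshift 0 2 c k)"
      by (simp_all add: k coeff_backshift_def)
    then show "cmod (s2_quotient_coeff c k) \<le> cmod (coeff_backshift 1 1 c k) + cmod (d k)"
      using triangle[of "c (m + 1, n + 1)" "if n = 0 then c (m + 2, 0) else 0"
          "if m = 0 then c (0, n + 2) else 0"]
      by (simp add: norm_d k s2_quotient_coeff_def coeff_backshift_def)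
  qed
qed

lemma Atriv_vanishing_at_origin_decomp:
  assumes lam: "0 < lam" and h: "h \<in> Atriv lam" and h0: "h (0, 0) = 0"
  shows "\<exists>f1 \<in> Atriv lam. \<exists>f2 \<in> Atriv lam. h = (\<lambda>z. M_s1 f1 z + M_s2 f2 z)"
proof -
  obtain c where c: "is_coeff lam h c" and sym: "\<And>z1 z2. h (z2, z1) = h (z1, z2)"
    using h by (auto simp: Atriv_def Aspace_def)
  have c_sym: "c (n, m) = c (m, n)" for m n
    using c sym by (rule is_coeff_symmetric)
  define f1 where "f1 = power_series (s1_quotient_coeff c)"
  define f2 where "f2 = power_series (s2_quotient_coeff c)"
  have f1: "is_coeff lam f1 (s1_quotient_coeff c)" and f2: "is_coeff lam f2 (s2_quotient_coeff c)"
    unfolding f1_def f2_def using is_coeff_s1_quotient[OF lam c] is_coeff_s2_quotient[OF lam c] .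
  have "f1 \<in> Atriv lam" "f2 \<in> Atriv lam"
    using f1 f2 c_sym
    by (auto simp: Atriv_def Aspace_def f1_def f2_def s1_quotient_coeff_def s2_quotient_coeff_def
        intro!: power_series_symmetric)
  moreover have "is_coeff lam (\<lambda>z. M_s1 f1 z + M_s2 f2 z) c"
    using is_coeff_add[OF is_coeff_M_s1[OF lam f1] is_coeff_M_s2[OF lam f2]]
      s_quotient_coeff_decomp[of c] c_sym[of 0 1] is_coeff_at_origin[OF c] h0
    by simp
  then have "h = (\<lambda>z. M_s1 f1 z + M_s2 f2 z)"
    using c by (rule is_coeff_fun_unique[rotated])
  ultimately show ?thesis
    by blast
qed

section \<open>Differences of powers\<close>

definition power_diff :: "nat \<Rightarrow> complex \<times> complex \<Rightarrow> complex" where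
  "power_diff n z = (if z \<in> bidisc then fst z ^ Suc n - snd z ^ Suc n else 0)"

definition power_diff_coeff :: "nat \<Rightarrow> nat \<times> nat \<Rightarrow> complex" where
  "power_diff_coeff n k = (if k = (Suc n, 0) then 1 else if k = (0, Suc n) then -1 else 0)"

lemma is_coeff_power_diff: "is_coeff lam (power_diff n) (power_diff_coeff n)"
proof (rule is_coeffI)
  show "(\<lambda>k. wt lam k * (cmod (power_diff_coeff n k))\<^sup>2) summable_on UNIV"
    by (rule has_sum_imp_summable[OF has_sum_finite_neutralI[of "{(Suc n, 0), (0, Suc n)}"]])
      (auto simp: power_diff_coeff_def)
  show "(coeff_term (power_diff_coeff n) z has_sum power_diff n z) UNIV" if "z \<in> bidisc" for z
    by (rule has_sum_finite_neutralI[of "{(Suc n, 0), (0, Suc n)}"])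
      (auto simp: that coeff_term_def power_diff_coeff_def power_diff_def split: if_splits)
qed (simp add: power_diff_def)

lemma power_diff_Asign: "power_diff n \<in> Asign lam"
  using is_coeff_power_diff bidisc_swap
  by (fastforce simp: Asign_def Aspace_def power_diff_def)

lemma power_diff_Suc_0: "power_diff (Suc 0) = M_s1 (power_diff 0)"
  by (auto simp: fun_eq_iff power_diff_def M_s1_def algebra_simps power2_eq_square)

lemma power_diff_Suc_Suc:
  "power_diff (Suc (Suc n)) = (\<lambda>z. M_s1 (power_diff (Suc n)) z + (-1) * M_s2 (power_diff n) z)"
  by (auto simp: fun_eq_iff power_diff_def M_s1_def M_s2_def algebra_simps)

lemma hnorm_power_diff: "hnorm lam (power_diff n) = sqrt (wt lam (Suc n, 0) + wt lam (0, Suc n))"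
proof -
  have "((\<lambda>k. wt lam k * (cmod (power_diff_coeff n k))\<^sup>2) has_sum
      wt lam (Suc n, 0) + wt lam (0, Suc n)) UNIV"
    by (rule has_sum_finite_neutralI[of "{(Suc n, 0), (0, Suc n)}"]) (auto simp: power_diff_coeff_def)
  then show ?thesis
    by (simp add: hnorm_is_coeff[OF is_coeff_power_diff] infsumI)
qed

lemma power_diff_0_notin_M_s_range:
  assumes lam: "0 < lam" and u: "u \<in> Asign lam" and v: "v \<in> Asign lam"
  shows "power_diff 0 \<noteq> (\<lambda>z. M_s1 u z + M_s2 v z)"
proof
  assume eq: "power_diff 0 = (\<lambda>z. M_s1 u z + M_s2 v z)"
  obtain a b where a: "is_coeff lam u a" and b: "is_coeff lam v b"
    using u v by (auto simp: Asign_def Aspace_def)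
  have "is_coeff lam (power_diff 0)
      (\<lambda>k. coeff_shift 1 0 a k + coeff_shift 0 1 a k + coeff_shift 1 1 b k)"
    unfolding eq by (rule is_coeff_add[OF is_coeff_M_s1[OF lam a] is_coeff_M_s2[OF lam b]])
  then have "(\<lambda>k. coeff_shift 1 0 a k + coeff_shift 0 1 a k + coeff_shift 1 1 b k) = power_diff_coeff 0"
    using is_coeff_power_diff by (rule is_coeff_unique)
  from fun_cong[OF this, of "(1, 0)"] have "a (0, 0) = 1"
    by (simp add: coeff_shift_def power_diff_coeff_def)
  moreover have "a (0, 0) = 0"
    using is_coeff_at_origin[OF a] Asign_at_origin[OF u] by simp
  ultimately show False
    by simp
qed

text \<open>Coefficients of \<open>h\<^sub>n f\<close>, where \<open>c\<close> are those of \<open>f\<close> and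
  \<open>h\<^sub>n = \<Sum>\<^sub>k\<^sub>+\<^sub>l\<^sub>=\<^sub>n z\<^sub>1\<^sup>k z\<^sub>2\<^sup>l\<close> is the complete homogeneous symmetric polynomial, computed
  from \<open>h\<^sub>0 = 1\<close>, \<open>h\<^sub>1 = s\<^sub>1\<close> and \<open>h\<^sub>n\<^sub>+\<^sub>2 = s\<^sub>1 h\<^sub>n\<^sub>+\<^sub>1 - s\<^sub>2 h\<^sub>n\<close>.\<close>

fun complete_hom_mult_coeff :: "(nat \<times> nat \<Rightarrow> complex) \<Rightarrow> nat \<Rightarrow> nat \<times> nat \<Rightarrow> complex" where
  "complete_hom_mult_coeff c 0 = c"
| "complete_hom_mult_coeff c (Suc 0) = (\<lambda>k. coeff_shift 1 0 c k + coeff_shift 0 1 c k)"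
| "complete_hom_mult_coeff c (Suc (Suc n)) =
     (\<lambda>k. coeff_shift 1 0 (complete_hom_mult_coeff c (Suc n)) k
        + coeff_shift 0 1 (complete_hom_mult_coeff c (Suc n)) k
        + (-1) * coeff_shift 1 1 (complete_hom_mult_coeff c n) k)"

lemma complete_hom_mult_coeff_diagonal:
  "k + l = n \<Longrightarrow> complete_hom_mult_coeff c n (k, l) = c (0, 0)"
proof (induction n arbitrary: k l rule: induct_nat_012)
  case 0
  then show ?case
    by simp
next
  case 1
  then show ?case
    by (cases k) (auto simp: coeff_shift_def)
next
  case (ge2 n)
  consider "k = 0" | "l = 0" | "0 < k" "0 < l"
    by blast
  then show ?case
  proof cases
    case 1
    then show ?thesis
      using ge2.IH(2)[of 0 "l - 1"] ge2.prems by (auto simp: coeff_shift_def)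
  next
    case 2
    then show ?thesis
      using ge2.IH(2)[of "k - 1" 0] ge2.prems by (auto simp: coeff_shift_def)
  next
    case 3
    then show ?thesis
      using ge2.IH(1)[of "k - 1" "l - 1"] ge2.IH(2)[of "k - 1" l] ge2.IH(2)[of k "l - 1"] ge2.prems
      by (auto simp: coeff_shift_def)
  qed
qed

lemma diagonal_weight_le_hnorm_sq:
  assumes "is_coeff lam f (complete_hom_mult_coeff c n)"
  shows "(cmod (c (0, 0)))\<^sup>2 * (\<Sum>k\<le>n. wt lam (k, n - k)) \<le> (hnorm lam f)\<^sup>2"
proof -
  have "inj_on (\<lambda>k. (k, n - k)) {..n}"
    by (auto simp: inj_on_def)
  then have "(cmod (c (0, 0)))\<^sup>2 * (\<Sum>k\<le>n. wt lam (k, n - k))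
      = (\<Sum>k\<in>(\<lambda>k. (k, n - k)) ` {..n}. wt lam k * (cmod (complete_hom_mult_coeff c n k))\<^sup>2)"
    by (simp add: sum.reindex sum_distrib_left complete_hom_mult_coeff_diagonal mult.commute)
  also have "\<dots> \<le> (hnorm lam f)\<^sup>2"
    using assms by (rule sum_weighted_coeff_le_hnorm_sq) simp
  finally show ?thesis .
qed

lemma harm_mult_weight_le:
  assumes "lam \<in> {1, 2}"
  shows "harm (Suc n) * (wt lam (Suc n, 0) + wt lam (0, Suc n)) \<le> 2 * (\<Sum>k\<le>n. wt lam (k, n - k))"
proof -
  have harm: "harm (Suc n) = (\<Sum>k\<le>n. 1 / real (Suc k))"
    by (simp add: harm_altdef lessThan_Suc_atMost inverse_eq_divide)
  show ?thesis
  proof (cases "lam = 1")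
    case True
    have "harm (Suc n) \<le> (\<Sum>k\<le>n. 1 :: real)"
      unfolding harm by (intro sum_mono) simp
    then show ?thesis
      unfolding True wt_1 by simp
  next
    case False
    then have lam: "lam = 2"
      using assms by simp
    have "harm (Suc n) / real (n + 2) = (\<Sum>k\<le>n. 1 / (real (Suc k) * real (n + 2)))"
      unfolding harm by (simp add: sum_divide_distrib)
    also have "\<dots> \<le> (\<Sum>k\<le>n. wt lam (k, n - k))"
      unfolding lam wt_2 by (intro sum_mono frac_le mult_left_mono) auto
    finally show ?thesis
      using lam by (simp add: wt_2 field_simps)
  qed
qed

lemma harm_bound_of_power_diff_bound:
  assumes lam: "lam \<in> {1, 2}" and f: "is_coeff lam f (complete_hom_mult_coeff c n)"
    and bound: "hnorm lam f \<le> C * hnorm lam (power_diff n)"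
  shows "(cmod (c (0, 0)))\<^sup>2 * harm (Suc n) \<le> 2 * C\<^sup>2"
proof -
  define A where "A = (cmod (c (0, 0)))\<^sup>2"
  define P where "P = wt lam (Suc n, 0) + wt lam (0, Suc n)"
  have P: "0 < P"
    using lam wt_pos[of lam] by (auto simp: P_def intro: add_pos_pos)
  have "A * (harm (Suc n) * P) \<le> A * (2 * (\<Sum>k\<le>n. wt lam (k, n - k)))"
    using harm_mult_weight_le[OF lam, of n] unfolding A_def P_def by (intro mult_left_mono) auto
  also have "\<dots> = 2 * (A * (\<Sum>k\<le>n. wt lam (k, n - k)))"
    by simp
  also have "\<dots> \<le> 2 * (hnorm lam f)\<^sup>2"
    unfolding A_def using diagonal_weight_le_hnorm_sq[OF f] by simp
  also have "\<dots> \<le> 2 * (C * sqrt P)\<^sup>2"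
  proof -
    have "hnorm lam f \<le> C * sqrt P"
      using bound by (simp add: hnorm_power_diff P_def)
    then have "(hnorm lam f)\<^sup>2 \<le> (C * sqrt P)\<^sup>2"
      by (rule power_mono) (rule hnorm_nonneg)
    then show ?thesis
      by simp
  qed
  also have "\<dots> = (2 * C\<^sup>2) * P"
    using P by (simp add: power_mult_distrib)
  finally have "(A * harm (Suc n)) * P \<le> (2 * C\<^sup>2) * P"
    by (simp add: mult_ac)
  then show ?thesis
    using P unfolding A_def by (simp only: mult_le_cancel_right_pos)
qed

lemma complete_hom_mult_unbounded:
  assumes lam: "lam \<in> {1, 2}" and c0: "c (0, 0) \<noteq> 0"
    and Q: "\<And>n. is_coeff lam (Q n) (complete_hom_mult_coeff c n)"
  shows "\<not> (\<exists>C. \<forall>n. hnorm lam (Q n) \<le> C * hnorm lam (power_diff n))"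
proof
  assume "\<exists>C. \<forall>n. hnorm lam (Q n) \<le> C * hnorm lam (power_diff n)"
  then obtain C where C: "\<And>n. hnorm lam (Q n) \<le> C * hnorm lam (power_diff n)"
    by blast
  define A where "A = (cmod (c (0, 0)))\<^sup>2"
  have A: "0 < A"
    using c0 by (simp add: A_def)
  have harm_bounded: "harm (Suc n) \<le> 2 * C\<^sup>2 / A" for n
    using harm_bound_of_power_diff_bound[OF lam Q C, of n] A
    by (simp add: A_def pos_le_divide_eq mult.commute)
  have "eventually (\<lambda>m. 2 * C\<^sup>2 / A + 1 \<le> harm m) sequentially"
    using harm_at_top unfolding filterlim_at_top by blast
  then obtain N where N: "\<And>m. N \<le> m \<Longrightarrow> 2 * C\<^sup>2 / A + 1 \<le> harm m"
    unfolding eventually_sequentially by blast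
  have "2 * C\<^sup>2 / A + 1 \<le> harm (Suc N)"
    by (rule N) simp
  then show False
    using harm_bounded[of N] by linarith
qed

section \<open>Intertwining operators\<close>

lemma inverse_intertwines:
  assumes "\<forall>f \<in> S. M f \<in> S" and "\<forall>g \<in> T. Y g \<in> S"
    and "\<forall>f \<in> S. Y (X f) = f" and "\<forall>g \<in> T. X (Y g) = g"
    and "\<forall>f \<in> S. X (M f) = M (X f)" and "g \<in> T"
  shows "Y (M g) = M (Y g)"
proof -
  have Yg: "Y g \<in> S"
    using assms by blast
  have "Y (M g) = Y (M (X (Y g)))"
    using assms by simp
  also have "\<dots> = Y (X (M (Y g)))"
    using assms(5) Yg by simp
  also have "\<dots> = M (Y g)"
    using assms(1,3) Yg by blast
  finally show ?thesis .
qed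

lemma intertwiner_preimage_power_diff_0:
  assumes lam: "0 < lam" and X: "bounded_op lam (Atriv lam) (Asign lam) X"
    and X_s1: "\<forall>f \<in> Atriv lam. X (M_s1 f) = M_s1 (X f)"
    and X_s2: "\<forall>f \<in> Atriv lam. X (M_s2 f) = M_s2 (X f)"
    and h: "h \<in> Atriv lam" and Xh: "X h = power_diff 0"
  shows "h (0, 0) \<noteq> 0"
proof
  assume "h (0, 0) = 0"
  then obtain f1 f2 where f1: "f1 \<in> Atriv lam" and f2: "f2 \<in> Atriv lam"
    and h_eq: "h = (\<lambda>z. M_s1 f1 z + M_s2 f2 z)"
    using Atriv_vanishing_at_origin_decomp[OF lam h] by blast
  have "power_diff 0 = (\<lambda>z. X (M_s1 f1) z + X (M_s2 f2) z)"
    using X Atriv_M_s[OF lam f1] Atriv_M_s[OF lam f2]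
    unfolding Xh[symmetric] h_eq bounded_op_def by blast
  also have "\<dots> = (\<lambda>z. M_s1 (X f1) z + M_s2 (X f2) z)"
    using X_s1 X_s2 f1 f2 by simp
  finally show False
    using power_diff_0_notin_M_s_range[OF lam] X f1 f2 unfolding bounded_op_def by blast
qed

lemma is_coeff_intertwined_power_diff:
  assumes lam: "0 < lam" and Y: "bounded_op lam (Asign lam) (Atriv lam) Y"
    and Y_s1: "\<forall>g \<in> Asign lam. Y (M_s1 g) = M_s1 (Y g)"
    and Y_s2: "\<forall>g \<in> Asign lam. Y (M_s2 g) = M_s2 (Y g)"
    and c: "is_coeff lam (Y (power_diff 0)) c"
  shows "is_coeff lam (Y (power_diff n)) (complete_hom_mult_coeff c n)"
proof (induction n rule: induct_nat_012)
  case 0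
  then show ?case
    using c by simp
next
  case 1
  then show ?case
    using is_coeff_M_s1[OF lam c] Y_s1 power_diff_Asign by (simp add: power_diff_Suc_0)
next
  case (ge2 n)
  have "Y (power_diff (Suc (Suc n)))
      = (\<lambda>z. Y (M_s1 (power_diff (Suc n))) z + (-1) * Y (M_s2 (power_diff n)) z)"
    using Y Asign_M_s[OF lam power_diff_Asign] Asign_scale
    unfolding power_diff_Suc_Suc bounded_op_def by metis
  also have "\<dots> = (\<lambda>z. M_s1 (Y (power_diff (Suc n))) z + (-1) * M_s2 (Y (power_diff n)) z)"
    using Y_s1 Y_s2 power_diff_Asign by simp
  finally have Y_rec: "Y (power_diff (Suc (Suc n)))
      = (\<lambda>z. M_s1 (Y (power_diff (Suc n))) z + (-1) * M_s2 (Y (power_diff n)) z)" .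
  show ?case
    unfolding Y_rec complete_hom_mult_coeff.simps
    by (rule is_coeff_add[OF is_coeff_M_s1[OF lam ge2.IH(2)] is_coeff_scale[OF is_coeff_M_s2[OF lam ge2.IH(1)]]])
qed

theorem theorem4p24:
  fixes lam :: nat
  assumes "lam \<in> {1, 2}"
  shows "\<not> (\<exists>X Y.
      bounded_op lam (Atriv lam) (Asign lam) X \<and>
      bounded_op lam (Asign lam) (Atriv lam) Y \<and>
      (\<forall>f \<in> Atriv lam. Y (X f) = f) \<and>
      (\<forall>g \<in> Asign lam. X (Y g) = g) \<and>
      (\<forall>f \<in> Atriv lam. X (M_s1 f) = M_s1 (X f)) \<and>
      (\<forall>f \<in> Atriv lam. X (M_s2 f) = M_s2 (X f)))"
proof (intro notI, elim exE conjE)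
  fix X Y
  assume X: "bounded_op lam (Atriv lam) (Asign lam) X"
    and Y: "bounded_op lam (Asign lam) (Atriv lam) Y"
    and YX: "\<forall>f \<in> Atriv lam. Y (X f) = f" and XY: "\<forall>g \<in> Asign lam. X (Y g) = g"
    and X_s1: "\<forall>f \<in> Atriv lam. X (M_s1 f) = M_s1 (X f)"
    and X_s2: "\<forall>f \<in> Atriv lam. X (M_s2 f) = M_s2 (X f)"
  have lam: "0 < lam"
    using assms by auto
  have Y_maps: "\<forall>g \<in> Asign lam. Y g \<in> Atriv lam"
    using Y by (simp add: bounded_op_def)
  have Y_s1: "\<forall>g \<in> Asign lam. Y (M_s1 g) = M_s1 (Y g)"
    using inverse_intertwines[OF _ Y_maps YX XY X_s1] Atriv_M_s(1)[OF lam] by blast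
  have Y_s2: "\<forall>g \<in> Asign lam. Y (M_s2 g) = M_s2 (Y g)"
    using inverse_intertwines[OF _ Y_maps YX XY X_s2] Atriv_M_s(2)[OF lam] by blast
  have h: "Y (power_diff 0) \<in> Atriv lam"
    using Y_maps power_diff_Asign by blast
  then obtain c where c: "is_coeff lam (Y (power_diff 0)) c"
    by (auto simp: Atriv_def Aspace_def)
  have "c (0, 0) \<noteq> 0"
    using intertwiner_preimage_power_diff_0[OF lam X X_s1 X_s2 h] XY power_diff_Asign
      is_coeff_at_origin[OF c] by simp
  moreover have "\<exists>C. \<forall>n. hnorm lam (Y (power_diff n)) \<le> C * hnorm lam (power_diff n)"
    using Y power_diff_Asign unfolding bounded_op_def by blast
  ultimately show False
    using complete_hom_mult_unbounded[OF assms _ is_coeff_intertwined_power_diff[OF lam Y Y_s1 Y_s2 c]]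
    by blast
qed

end
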